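(* Let $A>0$, $\alpha>0$, $k\ge2$, and define \[ \Lambda^{(k,1)}(A,\alpha):=\inf_{a\ge1}\Big[\lambda_k(I_{A^{1/2}a},\alpha)+\lambda_1(I_{A^{1/2}/a},\alpha)\Big]. \] Then \[ \frac{3\pi^2\alpha^{2/3}}{(\pi^2+2A^{1/2}\alpha)^{2/3}A^{2/3}}(k-2)^{2/3}\le\Lambda^{(k,1)}(A,\alpha), \] and, provided $\alpha\le\pi^2A^{-1/2}k^2$, \[ \Lambda^{(k,1)}(A,\alpha)\le3\Big(\frac{\pi\alpha}{A}\Big)^{2/3}k^{2/3}. \] Moreover the infimum is attained, and (for fixed $A,\alpha$) there are constants $0<c\le c'$ such that for all sufficiently large $k$ it is attained at some $a_k\ge1$ with $ck^{2/3}\le a_k\le c'k^{2/3}$. Finally, \[ \lim_{k\to\infty}\frac{\Lambda^{(k,1)}(A,\alpha)}{k^{2/3}}=3\Big(\frac{\pi\alpha}{A}\Big)^{2/3}. \]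
   Context: For an interval $I_b\subset\mathbb{R}$ of length $b>0$ and $\alpha>0$, $\lambda_1(I_b,\alpha)<\lambda_2(I_b,\alpha)<\cdots$ denote the eigenvalues of the Robin problem $-u''=\lambda u$ on $I_b$, $\partial_\nu u+\alpha u=0$ at both endpoints ($\partial_\nu$ the outward derivative). *)

theory Defs
  imports Complex_Main
begin

definition robin_eigenvalue :: "real \<Rightarrow> real \<Rightarrow> real \<Rightarrow> bool" where
  "robin_eigenvalue b \<alpha> lam \<longleftrightarrow>
     (\<exists>u u'. (\<forall>x\<in>{0..b}. (u has_real_derivative u' x) (at x within {0..b}) \<and>
                          (u' has_real_derivative (- lam * u x)) (at x within {0..b}))
            \<and> (\<exists>x\<in>{0..b}. u x \<noteq> 0)
            \<and> - u' 0 + \<alpha> * u 0 = 0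
            \<and> u' b + \<alpha> * u b = 0)"

text \<open>lambda_k(I_b, alpha): the k-th eigenvalue (k >= 1) in increasing order
  (the eigenvalues are simple), i.e. the eigenvalue with exactly k-1 eigenvalues below it.\<close>
definition robin_ev :: "nat \<Rightarrow> real \<Rightarrow> real \<Rightarrow> real" where
  "robin_ev k b \<alpha> = (THE lam. robin_eigenvalue b \<alpha> lam \<and>
       card {\<mu>. robin_eigenvalue b \<alpha> \<mu> \<and> \<mu> < lam} = k - 1)"

definition robin_sum :: "nat \<Rightarrow> real \<Rightarrow> real \<Rightarrow> real \<Rightarrow> real" where
  "robin_sum k A \<alpha> a = robin_ev k (sqrt A * a) \<alpha> + robin_ev 1 (sqrt A / a) \<alpha>"

definition Lambda_k1 :: "nat \<Rightarrow> real \<Rightarrow> real \<Rightarrow> real" where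
  "Lambda_k1 k A \<alpha> = (INF a\<in>{1..}. robin_sum k A \<alpha> a)"

end

theory Submission
  imports Defs "HOL-Analysis.Analysis" "HOL-Real_Asymp.Real_Asymp"
begin

text \<open>Solving the Robin problem explicitly, \<open>\<lambda>\<close> is an eigenvalue of \<open>I\<^sub>b\<close> iff \<open>\<lambda> = \<mu>\<^sup>2\<close> with
  \<open>\<mu> > 0\<close> and \<open>\<mu> * b - 2 * arctan (\<alpha> / \<mu>) \<in> pi * \<nat>\<close>. Hence
  \<open>((k - 1) * pi / b)\<^sup>2 < \<lambda>\<^sub>k < (k * pi / b)\<^sup>2\<close>, and the Becker-Stark inequality
  \<open>tan x * (pi\<^sup>2 - 4 * x\<^sup>2) \<le> pi\<^sup>2 * x\<close> yields
  \<open>2 * \<alpha> * pi\<^sup>2 / (b * (pi\<^sup>2 + 2 * \<alpha> * b)) \<le> \<lambda>\<^sub>1 \<le> 2 * \<alpha> / b\<close>.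
  So the function minimised in \<open>Lambda_k1\<close> is squeezed between functions of the shape
  \<open>P / a\<^sup>2 + C * a\<close>, whose minimum over \<open>a > 0\<close> is \<open>3 / 2 * C * root 3 (2 * P / C)\<close>.
  It grows linearly in \<open>a\<close>, so the infimum is attained; comparing a minimiser with the
  upper bound confines it to \<open>a \<approx> k powr (2/3)\<close>, which lets the slope \<open>C\<close> of the lower
  bound tend to \<open>2 * \<alpha> / sqrt A\<close> and identifies the limit.\<close>

lemma sin_sub_double_arctan:
  fixes \<mu> \<alpha> y :: real
  assumes "\<mu> > 0"
  shows "(\<alpha>\<^sup>2 + \<mu>\<^sup>2) * sin (y - 2 * arctan (\<alpha> / \<mu>))
           = (\<mu>\<^sup>2 - \<alpha>\<^sup>2) * sin y - 2 * \<alpha> * \<mu> * cos y"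
proof -
  define t where "t = \<alpha> / \<mu>"
  define d where "d = 1 + t\<^sup>2"
  have "d > 0" by (simp add: d_def add_pos_nonneg)
  have sin2: "sin (2 * arctan t) = 2 * t / d"
    by (simp add: d_def sin_double sin_arctan cos_arctan power2_eq_square)
  have cos2: "cos (2 * arctan t) = (1 - t\<^sup>2) / d"
    by (simp add: d_def cos_double sin_arctan cos_arctan power_divide diff_divide_distrib)
  have "\<alpha>\<^sup>2 + \<mu>\<^sup>2 = \<mu>\<^sup>2 * d" using assms by (simp add: d_def t_def field_simps)
  then have "(\<alpha>\<^sup>2 + \<mu>\<^sup>2) * sin (y - 2 * arctan t)
        = \<mu>\<^sup>2 * d * (sin y * ((1 - t\<^sup>2) / d) - cos y * (2 * t / d))"
    by (simp add: sin_diff sin2 cos2)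
  also have "\<dots> = \<mu>\<^sup>2 * (sin y * (1 - t\<^sup>2) - cos y * (2 * t))"
    using \<open>d > 0\<close> by (simp add: field_simps)
  also have "\<dots> = (\<mu>\<^sup>2 - \<alpha>\<^sup>2) * sin y - 2 * \<alpha> * \<mu> * cos y"
    using assms by (simp add: t_def field_simps power2_eq_square)
  finally show ?thesis by (simp add: t_def)
qed

text \<open>If \<open>f' y = y * p y\<close> with \<open>p 0 = 0\<close> and \<open>p\<close> concave, then \<open>f\<close> first increases and then
  decreases, so it cannot dip below its boundary values.\<close>
lemma nonneg_if_derivative_factor_concave:
  fixes f p q :: "real \<Rightarrow> real"
  assumes f': "\<And>y. (f has_real_derivative y * p y) (at y)"
    and p': "\<And>y. (p has_real_derivative q y) (at y)"
    and q_antimono: "\<And>y z. 0 \<le> y \<Longrightarrow> y \<le> z \<Longrightarrow> z \<le> c \<Longrightarrow> q z \<le> q y"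
    and "f 0 = 0" "f c = 0" "p 0 = 0" and x: "0 < x" "x < c"
  shows "0 \<le> f x"
proof (rule ccontr)
  assume "\<not> 0 \<le> f x"
  obtain y1 where y1: "0 < y1" "y1 < x" "f x - f 0 = (x - 0) * (y1 * p y1)"
    using MVT2[of 0 x f "\<lambda>y. y * p y"] f' x by blast
  have "x * (y1 * p y1) < 0" using y1(3) \<open>\<not> 0 \<le> f x\<close> \<open>f 0 = 0\<close> by simp
  then have "p y1 < 0" using x y1 by (simp add: mult_less_0_iff)
  obtain y2 where y2: "x < y2" "y2 < c" "f c - f x = (c - x) * (y2 * p y2)"
    using MVT2[of x c f "\<lambda>y. y * p y"] f' x by blast
  have "(c - x) * (y2 * p y2) > 0" using y2(3) \<open>\<not> 0 \<le> f x\<close> \<open>f c = 0\<close> by simp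
  then have "p y2 > 0" using x y2 by (simp add: zero_less_mult_iff)
  obtain z1 where z1: "0 < z1" "z1 < y1" "p y1 - p 0 = (y1 - 0) * q z1"
    using MVT2[of 0 y1 p q] p' y1 by blast
  have "q z1 < 0" using z1 \<open>p y1 < 0\<close> \<open>p 0 = 0\<close> by (simp add: mult_less_0_iff)
  obtain z2 where z2: "y1 < z2" "z2 < y2" "p y2 - p y1 = (y2 - y1) * q z2"
    using MVT2[of y1 y2 p q] p' y1 y2 by fastforce
  have "(y2 - y1) * q z2 > 0" using z2(3) \<open>p y1 < 0\<close> \<open>p y2 > 0\<close> by linarith
  then have "q z2 > 0" using z2 by (simp add: zero_less_mult_iff)
  moreover have "q z2 \<le> q z1" using q_antimono[of z1 z2] z1 z2 y2 by simp
  ultimately show False using \<open>q z1 < 0\<close> by simp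
qed

lemma becker_stark:
  fixes x :: real
  assumes "0 < x" "x < pi / 2"
  shows "tan x * (pi\<^sup>2 - 4 * x\<^sup>2) \<le> pi\<^sup>2 * x"
proof -
  define c where "c = pi\<^sup>2 - 8"
  have "3 * 3 < pi * pi" using pi_gt3 by (intro mult_strict_mono) auto
  moreover have "pi * pi < 3.2 * 3.2" using pi_approx(2) by (intro mult_strict_mono) auto
  ultimately have c: "0 < c" "c < 4" by (simp_all add: c_def power2_eq_square)
  define f where "f y = pi\<^sup>2 * y * cos y - (pi\<^sup>2 - 4 * y\<^sup>2) * sin y" for y
  define p where "p y = 4 * y * cos y - c * sin y" for y
  define q where "q y = (4 - c) * cos y - 4 * y * sin y" for y
  have "0 \<le> f x"
  proof (rule nonneg_if_derivative_factor_concave[of f p q "pi / 2"])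
    show "(f has_real_derivative y * p y) (at y)" for y
      unfolding f_def p_def c_def
      by (rule derivative_eq_intros refl)+ (simp add: algebra_simps power2_eq_square)
    show "(p has_real_derivative q y) (at y)" for y
      unfolding p_def q_def by (rule derivative_eq_intros refl)+ (simp add: algebra_simps)
    show "q z \<le> q y" if "0 \<le> y" "y \<le> z" "z \<le> pi / 2" for y z
    proof -
      have "cos z \<le> cos y" "sin y \<le> sin z" "0 \<le> sin y"
        using that by (auto intro: cos_monotone_0_pi_le sin_monotone_2pi_le sin_ge_zero)
      then show ?thesis
        using that c unfolding q_def by (smt (verit) mult_left_mono mult_mono)
    qed
  qed (use assms in \<open>simp_all add: f_def p_def power_divide\<close>)
  moreover have "cos x > 0" using assms by (intro cos_gt_zero) auto
  ultimately show ?thesis by (simp add: f_def tan_def divide_le_eq algebra_simps)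
qed

lemma harmonic_solution_eq:
  fixes u u' :: "real \<Rightarrow> real"
  assumes "lam > 0" "b \<ge> 0"
    and D: "\<forall>x\<in>{0..b}. (u has_real_derivative u' x) (at x within {0..b}) \<and>
                        (u' has_real_derivative (- lam * u x)) (at x within {0..b})"
    and x: "x \<in> {0..b}"
  shows "u x = u 0 * cos (sqrt lam * x) + u' 0 / sqrt lam * sin (sqrt lam * x)"
    and "u' x = - u 0 * sqrt lam * sin (sqrt lam * x) + u' 0 * cos (sqrt lam * x)"
proof -
  define \<mu> where "\<mu> = sqrt lam"
  have \<mu>: "\<mu> > 0" "\<mu> * \<mu> = lam" using \<open>lam > 0\<close> by (auto simp: \<mu>_def)
  define w where "w x = u x - u 0 * cos (\<mu> * x) - u' 0 / \<mu> * sin (\<mu> * x)" for x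
  define w' where "w' x = u' x + u 0 * \<mu> * sin (\<mu> * x) - u' 0 * cos (\<mu> * x)" for x
  \<comment> \<open>The energy of the difference \<open>w\<close> is conserved and vanishes at \<open>0\<close>.\<close>
  have "((\<lambda>x. (w' x)\<^sup>2 + lam * (w x)\<^sup>2) has_real_derivative 0) (at x within {0..b})"
    if "x \<in> {0..b}" for x
    unfolding w_def w'_def using D that \<mu>
    by (auto intro!: derivative_eq_intros simp: field_simps power2_eq_square)
  then obtain c where c: "\<forall>x\<in>{0..b}. (w' x)\<^sup>2 + lam * (w x)\<^sup>2 = c"
    using has_field_derivative_zero_constant[OF convex_real_interval(5)] by blast
  have "c = 0" using c \<open>b \<ge> 0\<close> by (force simp: w_def w'_def)
  then have "(w' x)\<^sup>2 + lam * (w x)\<^sup>2 = 0" using c x by blast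
  then have "(w' x)\<^sup>2 = 0 \<and> lam * (w x)\<^sup>2 = 0"
    using add_nonneg_eq_0_iff[of "(w' x)\<^sup>2" "lam * (w x)\<^sup>2"] \<open>lam > 0\<close> by simp
  then have "w x = 0" "w' x = 0" using \<open>lam > 0\<close> by simp_all
  then show "u x = u 0 * cos (sqrt lam * x) + u' 0 / sqrt lam * sin (sqrt lam * x)"
    and "u' x = - u 0 * sqrt lam * sin (sqrt lam * x) + u' 0 * cos (sqrt lam * x)"
    by (simp_all add: w_def w'_def \<mu>_def)
qed

lemma continuous_attains_inf_linear_growth:
  fixes f :: "real \<Rightarrow> real"
  assumes "continuous_on {a..} f" "C > 0" "\<And>x. x \<ge> a \<Longrightarrow> C * x \<le> f x"
  shows "\<exists>x\<ge>a. \<forall>y\<ge>a. f x \<le> f y"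
proof -
  define R where "R = max a (f a / C)"
  have "a \<le> R" "f a / C \<le> R" by (simp_all add: R_def)
  then have "f a \<le> C * R" using \<open>C > 0\<close> by (simp add: pos_divide_le_eq mult_ac)
  have "continuous_on {a..R} f" using assms(1) by (rule continuous_on_subset) auto
  then obtain x where x: "x \<in> {a..R}" "\<And>y. y \<in> {a..R} \<Longrightarrow> f x \<le> f y"
    using continuous_attains_inf[of "{a..R}" f] \<open>a \<le> R\<close> by auto
  have "f x \<le> f y" if "y \<ge> a" for y
  proof (cases "y \<le> R")
    case False
    then have "C * R < C * y" using \<open>C > 0\<close> by simp
    then have "f x \<le> C * y" using x(2)[of a] \<open>a \<le> R\<close> \<open>f a \<le> C * R\<close> by simp
    then show ?thesis using assms(3)[OF that] by simp
  qed (use x that in simp)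
  with x(1) show ?thesis by auto
qed

lemma root_three_power2:
  assumes "x \<ge> 0"
  shows "root 3 (x\<^sup>2) = x powr (2/3)"
proof -
  have "root 3 (x\<^sup>2) = (x powr 2) powr (1/3)"
    using assms by (simp add: root_powr_inverse powr_numeral)
  also have "\<dots> = x powr (2/3)" by (simp add: powr_powr)
  finally show ?thesis .
qed

lemma powr_two_thirds_cube: "(x::real) \<ge> 0 \<Longrightarrow> (x powr (2/3)) ^ 3 = x\<^sup>2"
  by (simp add: root_three_power2[symmetric])

text \<open>The minimum over \<open>a > 0\<close> of \<open>P / a\<^sup>2 + C * a\<close>, attained at \<open>a = root 3 (2 * P / C)\<close>.\<close>
definition amgm_min :: "real \<Rightarrow> real \<Rightarrow> real" where
  "amgm_min C P = 3 / 2 * C * root 3 (2 * P / C)"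

lemma amgm_min_le:
  assumes "C > 0" "P \<ge> 0" "a > 0"
  shows "amgm_min C P \<le> P / a\<^sup>2 + C * a"
proof -
  obtain m where m: "m = root 3 (2 * P / C)" by simp
  then have "m \<ge> 0" "P = C * m ^ 3 / 2"
    using assms by (simp_all add: real_root_ge_zero)
  have "P / a\<^sup>2 + C * a - 3 / 2 * C * m = C / (2 * a\<^sup>2) * ((a - m)\<^sup>2 * (2 * a + m))"
    unfolding \<open>P = C * m ^ 3 / 2\<close> using assms
    by (simp add: field_simps power2_eq_square power3_eq_cube)
  also have "\<dots> \<ge> 0" using assms \<open>m \<ge> 0\<close> by simp
  finally show ?thesis by (simp add: amgm_min_def m)
qed

lemma amgm_min_attained:
  assumes "C > 0" "P \<ge> 0"
  shows "P / (root 3 (2 * P / C))\<^sup>2 + C * root 3 (2 * P / C) = amgm_min C P"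
proof -
  obtain m where m: "m = root 3 (2 * P / C)" by simp
  then have "P = C * m ^ 3 / 2" using assms by simp
  then have "P / m\<^sup>2 + C * m = 3 / 2 * C * m"
    by (cases "m = 0") (simp_all add: field_simps power2_eq_square power3_eq_cube)
  then show ?thesis by (simp add: amgm_min_def m)
qed

lemma amgm_min_mono: "C > 0 \<Longrightarrow> P \<le> P' \<Longrightarrow> amgm_min C P \<le> amgm_min C P'"
  by (simp add: amgm_min_def divide_right_mono)

lemma amgm_min_scale:
  assumes "t \<ge> 0"
  shows "amgm_min C (t\<^sup>2 * P) = t powr (2/3) * amgm_min C P"
proof -
  have "root 3 (2 * (t\<^sup>2 * P) / C) = root 3 (t\<^sup>2) * root 3 (2 * P / C)"
    by (simp add: real_root_mult[symmetric])
  then show ?thesis by (simp add: amgm_min_def root_three_power2[OF assms])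
qed

lemma amgm_min_nonneg: "C > 0 \<Longrightarrow> P \<ge> 0 \<Longrightarrow> amgm_min C P \<ge> 0"
  by (simp add: amgm_min_def real_root_ge_zero)

lemma tendsto_amgm_min:
  "(f \<longlongrightarrow> C) F \<Longrightarrow> C \<noteq> 0 \<Longrightarrow> ((\<lambda>x. amgm_min (f x) P) \<longlongrightarrow> amgm_min C P) F"
  unfolding amgm_min_def by (intro tendsto_intros)

section \<open>Robin eigenvalues of an interval\<close>

lemma robin_solution_trivial_if_nonpos:
  fixes u u' :: "real \<Rightarrow> real"
  assumes "b > 0" "\<alpha> > 0" "lam \<le> 0"
    and D: "\<forall>x\<in>{0..b}. (u has_real_derivative u' x) (at x within {0..b}) \<and>
                        (u' has_real_derivative (- lam * u x)) (at x within {0..b})"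
    and bc0: "- u' 0 + \<alpha> * u 0 = 0" and bcb: "u' b + \<alpha> * u b = 0"
  shows "\<forall>x\<in>{0..b}. u x = 0"
proof -
  define h where "h x = u x * u' x" for x
  have hd: "(h has_real_derivative (u' x)\<^sup>2 - lam * (u x)\<^sup>2) (at x within {0..b})"
    if "x \<in> {0..b}" for x
    unfolding h_def using D that
    by (auto intro!: derivative_eq_intros simp: power2_eq_square algebra_simps)
  have h_mono: "h x \<le> h y" if "0 \<le> x" "x \<le> y" "y \<le> b" for x y
  proof (rule DERIV_nonneg_imp_increasing_open[OF \<open>x \<le> y\<close>])
    fix z assume "x < z" "z < y"
    have "lam * (u z)\<^sup>2 \<le> 0" using \<open>lam \<le> 0\<close> by (simp add: mult_nonpos_nonneg)
    then have "0 \<le> (u' z)\<^sup>2 - lam * (u z)\<^sup>2" using zero_le_power2[of "u' z"] by linarith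
    with that hd[of z] \<open>x < z\<close> \<open>z < y\<close>
    show "\<exists>d. (h has_real_derivative d) (at z) \<and> 0 \<le> d"
      by (auto simp: at_within_Icc_at)
  next
    show "continuous_on {x..y} h"
      using DERIV_continuous_on[OF hd] by (rule continuous_on_subset) (use that in auto)
  qed
  have "u' 0 = \<alpha> * u 0" "u' b = - \<alpha> * u b" using bc0 bcb by linarith+
  then have h0: "h 0 = \<alpha> * (u 0)\<^sup>2" and hb: "h b = - \<alpha> * (u b)\<^sup>2"
    by (simp_all add: h_def power2_eq_square)
  \<comment> \<open>\<open>h\<close> is nondecreasing, but the boundary conditions make \<open>h 0 \<ge> 0 \<ge> h b\<close>.\<close>
  moreover have "0 \<le> h 0" "h b \<le> 0" using h0 hb \<open>\<alpha> > 0\<close> by simp_all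
  ultimately have "h 0 = 0" "h b = 0" using h_mono[of 0 b] \<open>b > 0\<close> by linarith+
  then have h_zero: "h x = 0" if "x \<in> {0..b}" for x
    using h_mono[of 0 x] h_mono[of x b] that by auto
  have "((\<lambda>x. (u x)\<^sup>2) has_real_derivative 0) (at x within {0..b})" if "x \<in> {0..b}" for x
    using D h_zero[OF that] that by (auto intro!: derivative_eq_intros simp: h_def)
  then obtain c where c: "\<forall>x\<in>{0..b}. (u x)\<^sup>2 = c"
    using has_field_derivative_zero_constant[OF convex_real_interval(5)] by blast
  moreover have "(u 0)\<^sup>2 = c" using c \<open>b > 0\<close> by simp
  moreover have "u 0 = 0" using \<open>h 0 = 0\<close> h0 \<open>\<alpha> > 0\<close> by simp
  ultimately show ?thesis by simp
qed

definition robin_secular :: "real \<Rightarrow> real \<Rightarrow> real \<Rightarrow> real" where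
  "robin_secular b \<alpha> \<mu> = \<mu> * b - 2 * arctan (\<alpha> / \<mu>)"

text \<open>The Robin defect \<open>u' b + \<alpha> * u b\<close> of the solution \<open>u x = c * (cos (\<mu> * x) + \<alpha> / \<mu> * sin (\<mu> * x))\<close>,
  which satisfies the condition at \<open>0\<close>.\<close>
lemma robin_boundary_defect:
  fixes c \<mu> \<alpha> b :: real
  assumes "\<mu> > 0"
  shows "c * (- \<mu> * sin (\<mu> * b) + \<alpha> * cos (\<mu> * b)) + \<alpha> * (c * (cos (\<mu> * b) + \<alpha> / \<mu> * sin (\<mu> * b)))
           = - c * (\<alpha>\<^sup>2 + \<mu>\<^sup>2) / \<mu> * sin (robin_secular b \<alpha> \<mu>)"
proof -
  have "c * (- \<mu> * sin (\<mu> * b) + \<alpha> * cos (\<mu> * b)) + \<alpha> * (c * (cos (\<mu> * b) + \<alpha> / \<mu> * sin (\<mu> * b)))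
        = - c / \<mu> * ((\<mu>\<^sup>2 - \<alpha>\<^sup>2) * sin (\<mu> * b) - 2 * \<alpha> * \<mu> * cos (\<mu> * b))"
    using assms by (simp add: field_simps power2_eq_square)
  also have "\<dots> = - c / \<mu> * ((\<alpha>\<^sup>2 + \<mu>\<^sup>2) * sin (\<mu> * b - 2 * arctan (\<alpha> / \<mu>)))"
    by (simp only: sin_sub_double_arctan[OF assms])
  finally show ?thesis by (simp add: robin_secular_def)
qed

lemma robin_secular_gt: "\<alpha> > 0 \<Longrightarrow> \<mu> > 0 \<Longrightarrow> \<mu> * b - pi < robin_secular b \<alpha> \<mu>"
  and robin_secular_lt: "\<alpha> > 0 \<Longrightarrow> \<mu> > 0 \<Longrightarrow> robin_secular b \<alpha> \<mu> < \<mu> * b"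
  using arctan_ubound[of "\<alpha> / \<mu>"] by (auto simp: robin_secular_def)

lemma robin_eigenvalue_iff_secular:
  assumes "b > 0" "\<alpha> > 0"
  shows "robin_eigenvalue b \<alpha> lam \<longleftrightarrow>
           lam > 0 \<and> (\<exists>n::nat. robin_secular b \<alpha> (sqrt lam) = real n * pi)"
proof
  assume "robin_eigenvalue b \<alpha> lam"
  then obtain u u' where
    D: "\<forall>x\<in>{0..b}. (u has_real_derivative u' x) (at x within {0..b}) \<and>
                    (u' has_real_derivative (- lam * u x)) (at x within {0..b})"
    and nz: "\<exists>x\<in>{0..b}. u x \<noteq> 0" and bc0: "- u' 0 + \<alpha> * u 0 = 0" and bcb: "u' b + \<alpha> * u b = 0"
    unfolding robin_eigenvalue_def by blast
  have "lam > 0"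
    using robin_solution_trivial_if_nonpos[OF assms _ D bc0 bcb] nz by force
  define \<mu> where "\<mu> = sqrt lam"
  have "\<mu> > 0" using \<open>lam > 0\<close> by (simp add: \<mu>_def)
  have u'0: "u' 0 = \<alpha> * u 0" using bc0 by simp
  have u: "u x = u 0 * (cos (\<mu> * x) + \<alpha> / \<mu> * sin (\<mu> * x))"
    and u': "u' x = u 0 * (- \<mu> * sin (\<mu> * x) + \<alpha> * cos (\<mu> * x))" if "x \<in> {0..b}" for x
    using harmonic_solution_eq[OF \<open>lam > 0\<close> _ D that] \<open>b > 0\<close> u'0
    by (simp_all add: \<mu>_def algebra_simps)
  have "u 0 \<noteq> 0" using nz u by force
  have "0 = - u 0 * (\<alpha>\<^sup>2 + \<mu>\<^sup>2) / \<mu> * sin (robin_secular b \<alpha> \<mu>)"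
    using bcb u[of b] u'[of b] \<open>b > 0\<close> robin_boundary_defect[OF \<open>\<mu> > 0\<close>, where c="u 0" and \<alpha>=\<alpha> and b=b] by simp
  then have "sin (robin_secular b \<alpha> \<mu>) = 0"
    using \<open>u 0 \<noteq> 0\<close> \<open>\<mu> > 0\<close> \<open>\<alpha> > 0\<close> by (simp add: add_pos_pos)
  then obtain i :: int where i: "robin_secular b \<alpha> \<mu> = of_int i * pi"
    using sin_zero_iff_int2 by blast
  \<comment> \<open>the secular function exceeds \<open>-pi\<close>, which excludes negative multiples of \<open>pi\<close>\<close>
  have "- pi < of_int i * pi"
    using robin_secular_gt[OF \<open>\<alpha> > 0\<close> \<open>\<mu> > 0\<close>, of b] mult_pos_pos[OF \<open>\<mu> > 0\<close> \<open>b > 0\<close>] i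
    by linarith
  then have "of_int (-1) < real_of_int i"
    using mult_right_less_imp_less[of "-1" pi "of_int i"] by simp
  then have "i \<ge> 0" by linarith
  then have "robin_secular b \<alpha> \<mu> = real (nat i) * pi" using i by simp
  with \<open>lam > 0\<close> show "lam > 0 \<and> (\<exists>n::nat. robin_secular b \<alpha> (sqrt lam) = real n * pi)"
    unfolding \<mu>_def by blast
next
  assume "lam > 0 \<and> (\<exists>n::nat. robin_secular b \<alpha> (sqrt lam) = real n * pi)"
  then obtain n :: nat where "lam > 0" and n: "robin_secular b \<alpha> (sqrt lam) = real n * pi"
    by blast
  define \<mu> where "\<mu> = sqrt lam"
  have \<mu>: "\<mu> > 0" "\<mu> * \<mu> = lam" using \<open>lam > 0\<close> by (auto simp: \<mu>_def)
  define u where "u x = cos (\<mu> * x) + \<alpha> / \<mu> * sin (\<mu> * x)" for x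
  define u' where "u' x = - \<mu> * sin (\<mu> * x) + \<alpha> * cos (\<mu> * x)" for x
  have "(u has_real_derivative u' x) (at x within {0..b}) \<and>
        (u' has_real_derivative (- lam * u x)) (at x within {0..b})" for x
    unfolding u_def u'_def \<mu>(2)[symmetric] using \<mu>(1)
    by (auto intro!: derivative_eq_intros simp: field_simps)
  moreover have "u' b + \<alpha> * u b = 0"
    using robin_boundary_defect[OF \<mu>(1), where c = 1 and \<alpha> = \<alpha> and b = b] n
    by (simp add: u_def u'_def \<mu>_def)
  moreover have "u 0 \<noteq> 0" "- u' 0 + \<alpha> * u 0 = 0" by (simp_all add: u_def u'_def)
  ultimately show "robin_eigenvalue b \<alpha> lam"
    unfolding robin_eigenvalue_def using \<open>b > 0\<close> by (intro exI[of _ u] exI[of _ u']) force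
qed

lemma robin_secular_strict_mono:
  assumes "b > 0" "\<alpha> > 0" "0 < x" "x < y"
  shows "robin_secular b \<alpha> x < robin_secular b \<alpha> y"
proof -
  have "\<alpha> / y < \<alpha> / x" using assms by (simp add: divide_strict_left_mono)
  then have "arctan (\<alpha> / y) < arctan (\<alpha> / x)" by (simp add: arctan_less_iff)
  moreover have "x * b < y * b" using assms by simp
  ultimately show ?thesis unfolding robin_secular_def by simp
qed

lemma robin_secular_less_iff:
  assumes "b > 0" "\<alpha> > 0" "x > 0" "y > 0"
  shows "robin_secular b \<alpha> x < robin_secular b \<alpha> y \<longleftrightarrow> x < y"
  using robin_secular_strict_mono[OF assms(1,2), of x y] robin_secular_strict_mono[OF assms(1,2), of y x]
    assms(3,4)
  by (cases x y rule: linorder_cases) auto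

lemma robin_secular_root_exists:
  assumes "b > 0" "\<alpha> > 0"
  shows "\<exists>\<mu>>0. robin_secular b \<alpha> \<mu> = real n * pi"
proof -
  define x0 where "x0 = min \<alpha> (1 / b)"
  define x1 where "x1 = (real n + 1) * pi / b"
  have "x0 > 0" "x0 * b \<le> 1" using assms by (auto simp: x0_def min_def field_simps)
  have "x1 > 0" "x1 * b = (real n + 1) * pi" using assms by (simp_all add: x1_def)
  have "pi / 4 \<le> arctan (\<alpha> / x0)"
    using arctan_monotone'[of 1 "\<alpha> / x0"] \<open>x0 > 0\<close> by (simp add: x0_def arctan_one)
  then have "robin_secular b \<alpha> x0 \<le> 1 - pi / 2"
    using \<open>x0 * b \<le> 1\<close> unfolding robin_secular_def by linarith
  also have "\<dots> \<le> real n * pi" using pi_gt3 by (simp add: order_trans[OF _ mult_nonneg_nonneg])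
  finally have "robin_secular b \<alpha> x0 \<le> real n * pi" .
  moreover have "real n * pi \<le> robin_secular b \<alpha> x1"
    using robin_secular_gt[OF \<open>\<alpha> > 0\<close> \<open>x1 > 0\<close>, of b] \<open>x1 * b = (real n + 1) * pi\<close>
    by (simp add: algebra_simps)
  moreover have "x0 \<le> x1"
  proof -
    have "(real n + 1) * pi = real n * pi + pi" "0 \<le> real n * pi" by (simp_all add: distrib_right)
    then have "1 \<le> (real n + 1) * pi" using pi_gt3 by linarith
    then have "1 / b \<le> x1" using assms by (simp add: x1_def divide_right_mono)
    then show ?thesis by (simp add: x0_def)
  qed
  moreover have "isCont (robin_secular b \<alpha>) x" if "x0 \<le> x" for x
    using that \<open>x0 > 0\<close> unfolding robin_secular_def by (intro continuous_intros) auto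
  ultimately obtain \<mu> where "x0 \<le> \<mu>" "robin_secular b \<alpha> \<mu> = real n * pi"
    using IVT[of "robin_secular b \<alpha>" x0 "real n * pi" x1] by blast
  with \<open>x0 > 0\<close> show ?thesis by (intro exI[of _ \<mu>]) auto
qed

text \<open>\<open>robin_root n b \<alpha>\<close> is the frequency \<open>sqrt \<lambda>\<^sub>n\<^sub>+\<^sub>1(I\<^sub>b, \<alpha>)\<close>; note the shift of the index.\<close>
definition robin_root :: "nat \<Rightarrow> real \<Rightarrow> real \<Rightarrow> real" where
  "robin_root n b \<alpha> = (THE \<mu>. \<mu> > 0 \<and> robin_secular b \<alpha> \<mu> = real n * pi)"

lemma robin_root_unique:
  assumes "b > 0" "\<alpha> > 0" "\<mu> > 0" "robin_secular b \<alpha> \<mu> = real n * pi"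
  shows "robin_root n b \<alpha> = \<mu>"
  unfolding robin_root_def
proof (rule the_equality)
  fix \<nu> assume "\<nu> > 0 \<and> robin_secular b \<alpha> \<nu> = real n * pi"
  then show "\<nu> = \<mu>"
    using robin_secular_less_iff[OF assms(1,2)] assms(3,4) by (metis less_irrefl linorder_cases)
qed (use assms in simp)

lemma robin_root_pos: "b > 0 \<Longrightarrow> \<alpha> > 0 \<Longrightarrow> robin_root n b \<alpha> > 0"
  and robin_secular_robin_root:
    "b > 0 \<Longrightarrow> \<alpha> > 0 \<Longrightarrow> robin_secular b \<alpha> (robin_root n b \<alpha>) = real n * pi"
  using robin_secular_root_exists[of b \<alpha> n] robin_root_unique[of b \<alpha>] by force+

lemma robin_root_bounds:
  assumes "b > 0" "\<alpha> > 0"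
  shows "real n * pi < robin_root n b \<alpha> * b" "robin_root n b \<alpha> * b < (real n + 1) * pi"
  using robin_secular_gt[OF assms(2) robin_root_pos[OF assms, of n], of b]
    robin_secular_lt[OF assms(2) robin_root_pos[OF assms, of n], of b]
    robin_secular_robin_root[OF assms, of n]
  by (simp_all add: algebra_simps)

lemma robin_root_strict_mono:
  assumes "b > 0" "\<alpha> > 0"
  shows "strict_mono (\<lambda>n. robin_root n b \<alpha>)"
  using robin_secular_less_iff[OF assms robin_root_pos[OF assms] robin_root_pos[OF assms]]
  by (auto intro!: strict_monoI simp: robin_secular_robin_root[OF assms])

lemma robin_eigenvalue_iff_root:
  assumes "b > 0" "\<alpha> > 0"
  shows "robin_eigenvalue b \<alpha> lam \<longleftrightarrow> (\<exists>n. lam = (robin_root n b \<alpha>)\<^sup>2)"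
proof
  assume "robin_eigenvalue b \<alpha> lam"
  then obtain n where "lam > 0" "robin_secular b \<alpha> (sqrt lam) = real n * pi"
    using robin_eigenvalue_iff_secular[OF assms] by blast
  then have "robin_root n b \<alpha> = sqrt lam" using robin_root_unique[OF assms] by simp
  with \<open>lam > 0\<close> show "\<exists>n. lam = (robin_root n b \<alpha>)\<^sup>2" by (intro exI[of _ n]) simp
next
  assume "\<exists>n. lam = (robin_root n b \<alpha>)\<^sup>2"
  then obtain n where "lam = (robin_root n b \<alpha>)\<^sup>2" by blast
  then show "robin_eigenvalue b \<alpha> lam"
    using robin_root_pos[OF assms, of n] robin_secular_robin_root[OF assms, of n]
    by (auto simp: robin_eigenvalue_iff_secular[OF assms])
qed

lemma robin_ev_eq_root:
  assumes "b > 0" "\<alpha> > 0" "k \<ge> 1"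
  shows "robin_ev k b \<alpha> = (robin_root (k - 1) b \<alpha>)\<^sup>2"
proof -
  define f where "f n = (robin_root n b \<alpha>)\<^sup>2" for n
  have "strict_mono f"
    using robin_root_strict_mono[OF assms(1,2)] robin_root_pos[OF assms(1,2)]
    by (auto simp: strict_mono_def f_def intro!: power_strict_mono order.strict_implies_order)
  have eig: "robin_eigenvalue b \<alpha> lam \<longleftrightarrow> lam \<in> range f" for lam
    by (auto simp: robin_eigenvalue_iff_root[OF assms(1,2)] f_def)
  have "{\<nu>. robin_eigenvalue b \<alpha> \<nu> \<and> \<nu> < f j} = f ` {..<j}" for j
    using strict_mono_less[OF \<open>strict_mono f\<close>] by (auto simp: eig)
  then have card: "card {\<nu>. robin_eigenvalue b \<alpha> \<nu> \<and> \<nu> < f j} = j" for j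
    using card_image[OF strict_mono_imp_inj_on[OF \<open>strict_mono f\<close>]] by simp
  show ?thesis
    unfolding robin_ev_def f_def[symmetric]
  proof (rule the_equality)
    fix lam assume "robin_eigenvalue b \<alpha> lam \<and> card {\<nu>. robin_eigenvalue b \<alpha> \<nu> \<and> \<nu> < lam} = k - 1"
    then show "lam = f (k - 1)" using card by (auto simp: eig)
  qed (use card eig in auto)
qed

lemma robin_ev_bounds:
  assumes "b > 0" "\<alpha> > 0" "k \<ge> 1"
  shows "((real k - 1) * pi / b)\<^sup>2 < robin_ev k b \<alpha>" "robin_ev k b \<alpha> < (real k * pi / b)\<^sup>2"
proof -
  let ?\<mu> = "robin_root (k - 1) b \<alpha>"
  have "real (k - 1) = real k - 1" using assms(3) by simp
  then have "(real k - 1) * pi / b < ?\<mu>" "?\<mu> < real k * pi / b"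
    using robin_root_bounds[OF assms(1,2), of "k - 1"] assms(1)
    by (simp_all add: pos_divide_less_eq pos_less_divide_eq)
  moreover have "0 \<le> (real k - 1) * pi / b" "0 \<le> ?\<mu>"
    using assms robin_root_pos[OF assms(1,2), of "k - 1"] by simp_all
  ultimately show "((real k - 1) * pi / b)\<^sup>2 < robin_ev k b \<alpha>" "robin_ev k b \<alpha> < (real k * pi / b)\<^sup>2"
    unfolding robin_ev_eq_root[OF assms] by (simp_all add: power_strict_mono)
qed

lemma robin_ev_pos: "b > 0 \<Longrightarrow> \<alpha> > 0 \<Longrightarrow> k \<ge> 1 \<Longrightarrow> robin_ev k b \<alpha> > 0"
  using robin_ev_eq_root[of b \<alpha> k] robin_root_pos[of b \<alpha> "k - 1"] by simp

lemma robin_ev1_upper: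
  assumes "b > 0" "\<alpha> > 0"
  shows "robin_ev 1 b \<alpha> \<le> 2 * \<alpha> / b"
proof -
  let ?\<mu> = "robin_root 0 b \<alpha>"
  have "?\<mu> > 0" using robin_root_pos[OF assms] .
  have "?\<mu> * b = 2 * arctan (\<alpha> / ?\<mu>)"
    using robin_secular_robin_root[OF assms, of 0] by (simp add: robin_secular_def)
  also have "\<dots> \<le> 2 * (\<alpha> / ?\<mu>)" using arctan_le_self[of "\<alpha> / ?\<mu>"] \<open>?\<mu> > 0\<close> assms by simp
  finally have "?\<mu>\<^sup>2 * b \<le> 2 * \<alpha>" using \<open>?\<mu> > 0\<close> by (simp add: field_simps power2_eq_square)
  then show ?thesis using robin_ev_eq_root[OF assms, of 1] assms by (simp add: le_divide_eq)
qed

lemma robin_ev1_lower: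
  assumes "b > 0" "\<alpha> > 0"
  shows "2 * \<alpha> * pi\<^sup>2 / (b * (pi\<^sup>2 + 2 * \<alpha> * b)) \<le> robin_ev 1 b \<alpha>"
proof -
  define \<mu> where "\<mu> = robin_root 0 b \<alpha>"
  define x where "x = arctan (\<alpha> / \<mu>)"
  have "\<mu> > 0" unfolding \<mu>_def using robin_root_pos[OF assms] .
  have b: "b = 2 * x / \<mu>"
    using robin_secular_robin_root[OF assms, of 0] \<open>\<mu> > 0\<close>
    by (simp add: robin_secular_def x_def \<mu>_def field_simps)
  have \<alpha>: "\<alpha> = \<mu> * tan x" using \<open>\<mu> > 0\<close> by (simp add: x_def tan_arctan)
  have "0 < x" "x < pi / 2" using assms \<open>\<mu> > 0\<close> arctan_ubound[of "\<alpha> / \<mu>"] by (auto simp: x_def)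
  have "2 * \<alpha> * pi\<^sup>2 = 2 * \<mu> * (tan x * pi\<^sup>2)" by (simp add: \<alpha>)
  also have "\<dots> \<le> 2 * \<mu> * (x * pi\<^sup>2 + 4 * x\<^sup>2 * tan x)"
    using becker_stark[OF \<open>0 < x\<close> \<open>x < pi / 2\<close>] \<open>\<mu> > 0\<close>
    by (intro mult_left_mono) (auto simp: algebra_simps)
  also have "\<dots> = \<mu>\<^sup>2 * (b * (pi\<^sup>2 + 2 * \<alpha> * b))"
    unfolding b \<alpha> using \<open>\<mu> > 0\<close> by (simp add: field_simps power2_eq_square)
  finally show ?thesis
    using robin_ev_eq_root[OF assms, of 1] assms by (simp add: \<mu>_def divide_le_eq add_pos_pos)
qed

lemma robin_root_continuous:
  assumes "\<alpha> > 0" "b > 0"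
  shows "isCont (\<lambda>b. robin_root n b \<alpha>) b"
proof -
  define \<mu> where "\<mu> = robin_root n b \<alpha>"
  have "\<mu> > 0" unfolding \<mu>_def using robin_root_pos[OF assms(2,1)] .
  \<comment> \<open>solving the secular equation for \<open>b\<close> gives the inverse function\<close>
  define g where "g z = (real n * pi + 2 * arctan (\<alpha> / z)) / z" for z
  have "g \<mu> = b"
    using robin_secular_robin_root[OF assms(2,1), of n] \<open>\<mu> > 0\<close>
    by (simp add: g_def \<mu>_def robin_secular_def field_simps)
  have "isCont (\<lambda>b. robin_root n b \<alpha>) (g \<mu>)"
  proof (rule isCont_inverse_function[where f = g and x = \<mu> and d = "\<mu> / 2"])
    fix z assume "\<bar>z - \<mu>\<bar> \<le> \<mu> / 2"
    then have "z > 0" using \<open>\<mu> > 0\<close> by linarith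
    then have "g z > 0"
      using assms(1) by (auto simp: g_def intro!: divide_pos_pos add_nonneg_pos)
    moreover have "robin_secular (g z) \<alpha> z = real n * pi"
      using \<open>z > 0\<close> by (simp add: g_def robin_secular_def field_simps)
    ultimately show "robin_root n (g z) \<alpha> = z"
      using robin_root_unique[OF _ assms(1) \<open>z > 0\<close>] by blast
    show "isCont g z" using \<open>z > 0\<close> unfolding g_def by (intro continuous_intros) auto
  qed (use \<open>\<mu> > 0\<close> in simp)
  then show ?thesis using \<open>g \<mu> = b\<close> by simp
qed

section \<open>Minimisation over the aspect ratio\<close>

lemma robin_sum_continuous:
  assumes "A > 0" "\<alpha> > 0" "k \<ge> 1" "a > 0"
  shows "isCont (robin_sum k A \<alpha>) a"
proof -
  let ?g = "\<lambda>a. (robin_root (k - 1) (sqrt A * a) \<alpha>)\<^sup>2 + (robin_root 0 (sqrt A / a) \<alpha>)\<^sup>2"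
  have "robin_sum k A \<alpha> x = ?g x" if "x > 0" for x
    using assms that by (simp add: robin_sum_def robin_ev_eq_root)
  then have ev: "\<forall>\<^sub>F x in nhds a. robin_sum k A \<alpha> x = ?g x"
    using eventually_nhds_in_open[of "{0<..}" a] \<open>a > 0\<close> by (auto elim!: eventually_mono)
  have "isCont (\<lambda>x. robin_root (k - 1) (sqrt A * x) \<alpha>) a"
    and "isCont (\<lambda>x. robin_root 0 (sqrt A / x) \<alpha>) a"
    using assms by (auto intro!: isCont_o2[OF _ robin_root_continuous])
  then have "isCont ?g a" by (intro continuous_intros)
  then show ?thesis using isCont_cong[OF ev] by simp
qed

text \<open>\<open>robin_slope A \<alpha> \<delta> * a\<close> bounds \<open>\<lambda>\<^sub>1(I\<^bsub>sqrt A / a\<^esub>, \<alpha>)\<close> from below as long as \<open>sqrt A / a \<le> \<delta>\<close>.\<close>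
definition robin_slope :: "real \<Rightarrow> real \<Rightarrow> real \<Rightarrow> real" where
  "robin_slope A \<alpha> \<delta> = 2 * \<alpha> * pi\<^sup>2 / (sqrt A * (pi\<^sup>2 + 2 * \<delta> * \<alpha>))"

lemma robin_slope_pos: "A > 0 \<Longrightarrow> \<alpha> > 0 \<Longrightarrow> \<delta> \<ge> 0 \<Longrightarrow> robin_slope A \<alpha> \<delta> > 0"
  by (simp add: robin_slope_def add_pos_nonneg)

lemma robin_ev1_ge_slope:
  assumes "A > 0" "\<alpha> > 0" "a > 0" "sqrt A / a \<le> \<delta>"
  shows "robin_slope A \<alpha> \<delta> * a \<le> robin_ev 1 (sqrt A / a) \<alpha>"
proof -
  define b where "b = sqrt A / a"
  have "b > 0" "b \<le> \<delta>" using assms by (simp_all add: b_def)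
  have "robin_slope A \<alpha> \<delta> * a = 2 * \<alpha> * pi\<^sup>2 / (b * (pi\<^sup>2 + 2 * \<alpha> * \<delta>))"
    using assms by (simp add: robin_slope_def b_def mult.commute)
  also have "\<dots> \<le> 2 * \<alpha> * pi\<^sup>2 / (b * (pi\<^sup>2 + 2 * \<alpha> * b))"
  proof (rule divide_left_mono)
    show "b * (pi\<^sup>2 + 2 * \<alpha> * b) \<le> b * (pi\<^sup>2 + 2 * \<alpha> * \<delta>)"
      using \<open>b > 0\<close> \<open>b \<le> \<delta>\<close> \<open>\<alpha> > 0\<close> by (simp add: mult_left_mono)
    show "0 < b * (pi\<^sup>2 + 2 * \<alpha> * \<delta>) * (b * (pi\<^sup>2 + 2 * \<alpha> * b))"
      using \<open>b > 0\<close> \<open>b \<le> \<delta>\<close> \<open>\<alpha> > 0\<close> by (simp add: add_pos_nonneg)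
  qed (use \<open>\<alpha> > 0\<close> in simp)
  also have "\<dots> \<le> robin_ev 1 b \<alpha>" using robin_ev1_lower[OF \<open>b > 0\<close> assms(2)] .
  finally show ?thesis by (simp add: b_def)
qed

lemma Lambda_k1_attained:
  assumes "A > 0" "\<alpha> > 0" "k \<ge> 1"
  shows "\<exists>a\<ge>1. Lambda_k1 k A \<alpha> = robin_sum k A \<alpha> a \<and> (\<forall>b\<ge>1. robin_sum k A \<alpha> a \<le> robin_sum k A \<alpha> b)"
proof -
  have "continuous_on {1..} (robin_sum k A \<alpha>)"
    using assms by (intro continuous_at_imp_continuous_on ballI robin_sum_continuous) auto
  moreover have "robin_slope A \<alpha> (sqrt A) * x \<le> robin_sum k A \<alpha> x" if "x \<ge> 1" for x
  proof -
    have "sqrt A / x \<le> sqrt A / 1" using assms that by (intro divide_left_mono) auto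
    then have "robin_slope A \<alpha> (sqrt A) * x \<le> robin_ev 1 (sqrt A / x) \<alpha>"
      using assms that by (intro robin_ev1_ge_slope) auto
    moreover have "robin_ev k (sqrt A * x) \<alpha> > 0" using assms that by (intro robin_ev_pos) auto
    ultimately show ?thesis by (simp add: robin_sum_def)
  qed
  moreover have "robin_slope A \<alpha> (sqrt A) > 0" using assms by (intro robin_slope_pos) auto
  ultimately obtain a where "a \<ge> 1" and min: "\<forall>b\<ge>1. robin_sum k A \<alpha> a \<le> robin_sum k A \<alpha> b"
    using continuous_attains_inf_linear_growth[of 1 "robin_sum k A \<alpha>"] by blast
  moreover have "Lambda_k1 k A \<alpha> = robin_sum k A \<alpha> a"
    unfolding Lambda_k1_def using \<open>a \<ge> 1\<close> min by (intro cInf_eq_minimum) auto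
  ultimately show ?thesis by blast
qed

lemma amgm_min_le_robin_sum:
  assumes "A > 0" "\<alpha> > 0" "k \<ge> 1" "a > 0" "sqrt A / a \<le> \<delta>"
  shows "amgm_min (robin_slope A \<alpha> \<delta>) ((real k - 1)\<^sup>2 * (pi\<^sup>2 / A)) \<le> robin_sum k A \<alpha> a"
proof -
  have "sqrt A / a > 0" using assms by simp
  then have "\<delta> > 0" using assms(5) by linarith
  have "((real k - 1) * pi / (sqrt A * a))\<^sup>2 < robin_ev k (sqrt A * a) \<alpha>"
    using assms by (intro robin_ev_bounds) auto
  then have "(real k - 1)\<^sup>2 * (pi\<^sup>2 / A) / a\<^sup>2 < robin_ev k (sqrt A * a) \<alpha>"
    using assms by (simp add: power_divide power_mult_distrib)
  moreover have "robin_slope A \<alpha> \<delta> * a \<le> robin_ev 1 (sqrt A / a) \<alpha>"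
    using robin_ev1_ge_slope[OF assms(1,2,4,5)] .
  moreover have "amgm_min (robin_slope A \<alpha> \<delta>) ((real k - 1)\<^sup>2 * (pi\<^sup>2 / A))
      \<le> (real k - 1)\<^sup>2 * (pi\<^sup>2 / A) / a\<^sup>2 + robin_slope A \<alpha> \<delta> * a"
    using assms \<open>\<delta> > 0\<close> by (intro amgm_min_le robin_slope_pos) auto
  ultimately show ?thesis by (simp add: robin_sum_def)
qed

lemma Lambda_k1_le_amgm_min:
  assumes "A > 0" "\<alpha> > 0" "k \<ge> 1" "\<alpha> * sqrt A \<le> pi\<^sup>2 * (real k)\<^sup>2"
  shows "Lambda_k1 k A \<alpha> \<le> amgm_min (2 * \<alpha> / sqrt A) ((real k)\<^sup>2 * (pi\<^sup>2 / A))"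
proof -
  define C where "C = 2 * \<alpha> / sqrt A"
  define P where "P = (real k)\<^sup>2 * (pi\<^sup>2 / A)"
  define m where "m = root 3 (2 * P / C)"
  have "C > 0" "P \<ge> 0" using assms by (simp_all add: C_def P_def)
  have "2 * P / C = pi\<^sup>2 * (real k)\<^sup>2 / (\<alpha> * sqrt A)"
    using assms by (simp add: C_def P_def field_simps power2_eq_square)
  then have "m \<ge> 1" using assms by (simp add: m_def)
  obtain a where "Lambda_k1 k A \<alpha> = robin_sum k A \<alpha> a" "\<forall>b\<ge>1. robin_sum k A \<alpha> a \<le> robin_sum k A \<alpha> b"
    using Lambda_k1_attained[OF assms(1-3)] by blast
  then have "Lambda_k1 k A \<alpha> \<le> robin_sum k A \<alpha> m" using \<open>m \<ge> 1\<close> by simp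
  also have "\<dots> < (real k * pi / (sqrt A * m))\<^sup>2 + 2 * \<alpha> / (sqrt A / m)"
    unfolding robin_sum_def using assms \<open>m \<ge> 1\<close>
    by (intro add_less_le_mono robin_ev_bounds(2) robin_ev1_upper) auto
  also have "\<dots> = P / m\<^sup>2 + C * m"
    using assms \<open>m \<ge> 1\<close> by (simp add: P_def C_def power_divide power_mult_distrib)
  also have "\<dots> = amgm_min C P" unfolding m_def by (rule amgm_min_attained[OF \<open>C > 0\<close> \<open>P \<ge> 0\<close>])
  finally show ?thesis by (simp add: C_def P_def)
qed

lemma robin_sum_le_imp_bounds:
  assumes "A > 0" "\<alpha> > 0" "k \<ge> 2" "a \<ge> 1" "robin_sum k A \<alpha> a \<le> B"
  shows "robin_slope A \<alpha> (sqrt A) * a < B" "(real k * pi)\<^sup>2 < 4 * A * B * a\<^sup>2"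
proof -
  have "sqrt A / a \<le> sqrt A / 1" using assms by (intro divide_left_mono) auto
  then have "robin_slope A \<alpha> (sqrt A) * a \<le> robin_ev 1 (sqrt A / a) \<alpha>"
    using assms by (intro robin_ev1_ge_slope) auto
  moreover have pos: "0 < robin_ev k (sqrt A * a) \<alpha>" "0 < robin_ev 1 (sqrt A / a) \<alpha>"
    using assms by (auto intro!: robin_ev_pos)
  ultimately show "robin_slope A \<alpha> (sqrt A) * a < B"
    using assms(5) by (simp add: robin_sum_def)
  define s where "s = sqrt A * a"
  have "s > 0" using assms by (simp add: s_def)
  have "real k / 2 * pi / s \<le> (real k - 1) * pi / s"
    using assms \<open>s > 0\<close> by (intro divide_right_mono mult_right_mono) auto
  then have "(real k * pi / (2 * s))\<^sup>2 \<le> ((real k - 1) * pi / s)\<^sup>2"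
    using \<open>s > 0\<close> by (intro power_mono) auto
  also have "\<dots> < robin_ev k s \<alpha>" using assms \<open>s > 0\<close> by (intro robin_ev_bounds) auto
  also have "\<dots> < B" using pos assms(5) by (simp add: robin_sum_def s_def)
  finally have "(real k * pi)\<^sup>2 / (4 * A * a\<^sup>2) < B"
    using assms by (simp add: s_def power_divide power_mult_distrib)
  then show "(real k * pi)\<^sup>2 < 4 * A * B * a\<^sup>2"
    using assms by (simp add: divide_less_eq mult_ac)
qed

lemma amgm_min_robin_slope:
  assumes "A > 0" "\<alpha> > 0" "\<delta> \<ge> 0"
  shows "amgm_min (robin_slope A \<alpha> \<delta>) (pi\<^sup>2 / A)
           = 3 * pi\<^sup>2 * \<alpha> powr (2/3) / ((pi\<^sup>2 + 2 * \<delta> * \<alpha>) powr (2/3) * A powr (2/3))"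
proof (rule power_eq_imp_eq_base[of _ 3])
  define D where "D = pi\<^sup>2 + 2 * \<delta> * \<alpha>"
  define r where "r = sqrt A"
  have "D > 0" "r > 0" "A = r\<^sup>2" using assms by (simp_all add: D_def r_def add_pos_nonneg)
  have "2 * (pi\<^sup>2 / A) / robin_slope A \<alpha> \<delta> = D / (\<alpha> * sqrt A)"
    using assms \<open>r > 0\<close>
    by (simp add: robin_slope_def D_def r_def[symmetric] \<open>A = r\<^sup>2\<close> field_simps power2_eq_square)
  moreover have "root 3 (D / (\<alpha> * sqrt A)) ^ 3 = D / (\<alpha> * sqrt A)"
    using assms \<open>D > 0\<close> by simp
  ultimately have "(amgm_min (robin_slope A \<alpha> \<delta>) (pi\<^sup>2 / A)) ^ 3
      = (3 / 2) ^ 3 * (2 * \<alpha> * pi\<^sup>2 / (sqrt A * D)) ^ 3 * (D / (\<alpha> * sqrt A))"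
    by (simp only: amgm_min_def power_mult_distrib) (simp add: robin_slope_def D_def)
  also have "\<dots> = 27 * pi ^ 6 * \<alpha>\<^sup>2 / (D\<^sup>2 * A\<^sup>2)"
    using assms \<open>D > 0\<close> \<open>r > 0\<close>
    by (simp add: r_def[symmetric] \<open>A = r\<^sup>2\<close> field_simps power2_eq_square power3_eq_cube)
      (simp add: power_def numeral_eq_Suc)
  also have "\<dots> = (3 * pi\<^sup>2 * \<alpha> powr (2/3) / (D powr (2/3) * A powr (2/3))) ^ 3"
    using assms \<open>D > 0\<close>
    by (simp add: power_mult_distrib power_divide powr_two_thirds_cube)
  finally show "(amgm_min (robin_slope A \<alpha> \<delta>) (pi\<^sup>2 / A)) ^ 3
      = (3 * pi\<^sup>2 * \<alpha> powr (2/3) / ((pi\<^sup>2 + 2 * \<delta> * \<alpha>) powr (2/3) * A powr (2/3))) ^ 3"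
    by (simp add: D_def)
qed (use assms in \<open>auto intro!: amgm_min_nonneg robin_slope_pos\<close>)

lemma amgm_min_robin_limit:
  assumes "A > 0" "\<alpha> > 0"
  shows "amgm_min (2 * \<alpha> / sqrt A) (pi\<^sup>2 / A) = 3 * (pi * \<alpha> / A) powr (2/3)"
proof (rule power_eq_imp_eq_base[of _ 3])
  define r where "r = sqrt A"
  have "r > 0" "A = r\<^sup>2" using assms by (simp_all add: r_def)
  have "(amgm_min (2 * \<alpha> / sqrt A) (pi\<^sup>2 / A)) ^ 3
      = 27 / 8 * (2 * \<alpha> / sqrt A) ^ 3 * (pi\<^sup>2 / (\<alpha> * sqrt A))"
    using assms \<open>r > 0\<close>
    by (simp add: amgm_min_def r_def[symmetric] \<open>A = r\<^sup>2\<close> power_mult_distrib field_simps power2_eq_square)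
  also have "\<dots> = 27 * (pi * \<alpha> / A)\<^sup>2"
    using assms \<open>r > 0\<close>
    by (simp add: r_def[symmetric] \<open>A = r\<^sup>2\<close> field_simps power2_eq_square power3_eq_cube)
  also have "\<dots> = (3 * (pi * \<alpha> / A) powr (2/3)) ^ 3"
    using assms by (simp add: power_mult_distrib powr_two_thirds_cube)
  finally show "(amgm_min (2 * \<alpha> / sqrt A) (pi\<^sup>2 / A)) ^ 3 = (3 * (pi * \<alpha> / A) powr (2/3)) ^ 3" .
qed (use assms in \<open>auto intro!: amgm_min_nonneg\<close>)

lemma Lambda_k1_lower:
  assumes "A > 0" "\<alpha> > 0" "k \<ge> 2"
  shows "3 * pi\<^sup>2 * \<alpha> powr (2/3) / ((pi\<^sup>2 + 2 * sqrt A * \<alpha>) powr (2/3) * A powr (2/3))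
           * (real k - 2) powr (2/3) \<le> Lambda_k1 k A \<alpha>"
proof -
  let ?C = "robin_slope A \<alpha> (sqrt A)"
  obtain a where "a \<ge> 1" "Lambda_k1 k A \<alpha> = robin_sum k A \<alpha> a"
    using Lambda_k1_attained[OF assms(1,2), of k] assms(3) by auto
  have "3 * pi\<^sup>2 * \<alpha> powr (2/3) / ((pi\<^sup>2 + 2 * sqrt A * \<alpha>) powr (2/3) * A powr (2/3))
          * (real k - 2) powr (2/3) = (real k - 2) powr (2/3) * amgm_min ?C (pi\<^sup>2 / A)"
    using assms by (simp add: amgm_min_robin_slope)
  also have "\<dots> = amgm_min ?C ((real k - 2)\<^sup>2 * (pi\<^sup>2 / A))"
    using assms by (subst amgm_min_scale) auto
  also have "\<dots> \<le> amgm_min ?C ((real k - 1)\<^sup>2 * (pi\<^sup>2 / A))"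
    using assms by (intro amgm_min_mono robin_slope_pos mult_right_mono power_mono) auto
  also have "\<dots> \<le> robin_sum k A \<alpha> a"
    using assms \<open>a \<ge> 1\<close> by (intro amgm_min_le_robin_sum) (auto simp: divide_le_eq)
  finally show ?thesis using \<open>Lambda_k1 k A \<alpha> = robin_sum k A \<alpha> a\<close> by simp
qed

lemma Lambda_k1_upper:
  assumes "A > 0" "\<alpha> > 0" "k \<ge> 1" "\<alpha> * sqrt A \<le> pi\<^sup>2 * (real k)\<^sup>2"
  shows "Lambda_k1 k A \<alpha> \<le> 3 * (pi * \<alpha> / A) powr (2/3) * real k powr (2/3)"
proof -
  have "Lambda_k1 k A \<alpha> \<le> amgm_min (2 * \<alpha> / sqrt A) ((real k)\<^sup>2 * (pi\<^sup>2 / A))"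
    by (rule Lambda_k1_le_amgm_min[OF assms])
  also have "\<dots> = real k powr (2/3) * amgm_min (2 * \<alpha> / sqrt A) (pi\<^sup>2 / A)"
    by (rule amgm_min_scale) simp
  finally show ?thesis unfolding amgm_min_robin_limit[OF assms(1,2)] by (simp add: mult_ac)
qed

lemma Lambda_k1_minimizer_bounds:
  fixes A \<alpha> :: real
  defines "U \<equiv> 3 * (pi * \<alpha> / A) powr (2/3)"
  assumes "A > 0" "\<alpha> > 0" "k \<ge> 2" "\<alpha> * sqrt A \<le> pi\<^sup>2 * (real k)\<^sup>2"
    and "a \<ge> 1" "Lambda_k1 k A \<alpha> = robin_sum k A \<alpha> a"
  shows "pi / (2 * sqrt (A * U)) * real k powr (2/3) \<le> a"
    and "a \<le> U / robin_slope A \<alpha> (sqrt A) * real k powr (2/3)"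
proof -
  define s where "s = real k powr (2/3)"
  have "s > 0" "U > 0" using assms by (simp_all add: s_def U_def)
  have "robin_sum k A \<alpha> a \<le> U * s"
    using Lambda_k1_upper[OF assms(2,3) _ assms(5)] assms(4,7) by (simp add: U_def s_def)
  note bounds = robin_sum_le_imp_bounds[OF assms(2-4,6) this]
  have "robin_slope A \<alpha> (sqrt A) > 0" using assms by (intro robin_slope_pos) auto
  then show "a \<le> U / robin_slope A \<alpha> (sqrt A) * real k powr (2/3)"
    using bounds(1) by (simp add: s_def field_simps)
  have "s ^ 3 = (real k)\<^sup>2" using powr_two_thirds_cube[of "real k"] by (simp add: s_def)
  then have "s * (s * pi)\<^sup>2 < s * (2 * sqrt (A * U) * a)\<^sup>2"
    using bounds(2) assms(2) \<open>U > 0\<close>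
    by (simp add: power_mult_distrib power3_eq_cube power2_eq_square mult_ac)
  then have "s * pi < 2 * sqrt (A * U) * a"
    using power_less_imp_less_base[of "s * pi" 2 "2 * sqrt (A * U) * a"] assms(2,6) \<open>U > 0\<close> \<open>s > 0\<close>
    by simp
  then show "pi / (2 * sqrt (A * U)) * real k powr (2/3) \<le> a"
    using assms(2) \<open>U > 0\<close> by (simp add: s_def field_simps)
qed

lemma Lambda_k1_asymptotics:
  assumes "A > 0" "\<alpha> > 0"
  shows "(\<lambda>k. Lambda_k1 k A \<alpha> / real k powr (2/3)) \<longlonglongrightarrow> 3 * (pi * \<alpha> / A) powr (2/3)"
proof -
  define U where "U = 3 * (pi * \<alpha> / A) powr (2/3)"
  define c where "c = pi / (2 * sqrt (A * U))"
  define \<delta> where "\<delta> k = sqrt A / (c * real k powr (2/3))" for k :: nat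
  have "U > 0" "c > 0" using assms by (simp_all add: U_def c_def)
  have ev: "\<forall>\<^sub>F k in sequentially. k \<ge> 2 \<and> \<alpha> * sqrt A \<le> pi\<^sup>2 * (real k)\<^sup>2"
    using assms by (intro eventually_conj eventually_ge_at_top) real_asymp
  \<comment> \<open>minimisers grow like \<open>k powr (2/3)\<close>, so the slope bound for \<open>\<lambda>\<^sub>1\<close> improves to \<open>2 * \<alpha> / sqrt A\<close>\<close>
  have lower: "\<forall>\<^sub>F k in sequentially.
          (real k - 1) powr (2/3) / real k powr (2/3) * amgm_min (robin_slope A \<alpha> (\<delta> k)) (pi\<^sup>2 / A)
            \<le> Lambda_k1 k A \<alpha> / real k powr (2/3)"
    using ev
  proof eventually_elim
    case (elim k)
    obtain a where a: "a \<ge> 1" "Lambda_k1 k A \<alpha> = robin_sum k A \<alpha> a"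
      using Lambda_k1_attained[OF assms, of k] elim by auto
    have "c * real k powr (2/3) \<le> a"
      using Lambda_k1_minimizer_bounds(1)[OF assms _ _ a] elim by (simp add: c_def U_def)
    then have \<delta>k: "sqrt A / a \<le> \<delta> k"
      using assms \<open>c > 0\<close> elim a(1) unfolding \<delta>_def by (intro divide_left_mono) auto
    have "k \<ge> 1" "a > 0" using elim a(1) by simp_all
    then have "amgm_min (robin_slope A \<alpha> (\<delta> k)) ((real k - 1)\<^sup>2 * (pi\<^sup>2 / A)) \<le> Lambda_k1 k A \<alpha>"
      unfolding a(2) by (rule amgm_min_le_robin_sum[OF assms _ _ \<delta>k])
    then have "(real k - 1) powr (2/3) * amgm_min (robin_slope A \<alpha> (\<delta> k)) (pi\<^sup>2 / A) \<le> Lambda_k1 k A \<alpha>"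
      using elim by (subst (asm) amgm_min_scale) auto
    then show ?case by (simp add: divide_right_mono)
  qed
  have upper: "\<forall>\<^sub>F k in sequentially. Lambda_k1 k A \<alpha> / real k powr (2/3) \<le> U"
    using ev
  proof eventually_elim
    case (elim k)
    then show ?case
      using Lambda_k1_upper[OF assms, of k] by (simp add: U_def divide_le_eq)
  qed
  have "(\<lambda>k. (real k - 1) powr (2/3) / real k powr (2/3)
      * amgm_min (robin_slope A \<alpha> (\<delta> k)) (pi\<^sup>2 / A)) \<longlonglongrightarrow> 1 * amgm_min (robin_slope A \<alpha> 0) (pi\<^sup>2 / A)"
  proof (intro tendsto_mult tendsto_amgm_min)
    show "(\<lambda>k. (real k - 1) powr (2/3) / real k powr (2/3)) \<longlonglongrightarrow> 1" by real_asymp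
    have "\<delta> \<longlonglongrightarrow> 0" unfolding \<delta>_def using assms \<open>c > 0\<close> by real_asymp
    then show "(\<lambda>k. robin_slope A \<alpha> (\<delta> k)) \<longlonglongrightarrow> robin_slope A \<alpha> 0"
      unfolding robin_slope_def using assms by (intro tendsto_intros) auto
  qed (use assms in \<open>auto simp: robin_slope_def\<close>)
  moreover have "1 * amgm_min (robin_slope A \<alpha> 0) (pi\<^sup>2 / A) = U"
    using amgm_min_robin_limit[OF assms] by (simp add: robin_slope_def U_def)
  ultimately show ?thesis
    unfolding U_def[symmetric] by (intro tendsto_sandwich[OF lower upper _ tendsto_const]) simp
qed

lemma Lambda_k1_minimizer_growth:
  assumes "A > 0" "\<alpha> > 0"
  shows "\<exists>c c'. 0 < c \<and> c \<le> c' \<and>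
           (\<forall>\<^sub>F k in sequentially. \<exists>a\<ge>1. Lambda_k1 k A \<alpha> = robin_sum k A \<alpha> a \<and>
               c * real k powr (2/3) \<le> a \<and> a \<le> c' * real k powr (2/3))"
    (is "\<exists>c c'. _ \<and> _ \<and> (\<forall>\<^sub>F k in sequentially. ?Q c c' k)")
proof -
  define U where "U = 3 * (pi * \<alpha> / A) powr (2/3)"
  define c where "c = pi / (2 * sqrt (A * U))"
  define c' where "c' = U / robin_slope A \<alpha> (sqrt A)"
  let ?P = "?Q c c'"
  have "c > 0" using assms by (simp add: c_def U_def)
  have "\<forall>\<^sub>F k in sequentially. k \<ge> 2 \<and> \<alpha> * sqrt A \<le> pi\<^sup>2 * (real k)\<^sup>2"
    using assms by (intro eventually_conj eventually_ge_at_top) real_asymp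
  then have ev: "\<forall>\<^sub>F k in sequentially. k \<ge> 2 \<and> ?P k"
  proof eventually_elim
    case (elim k)
    obtain a where a: "a \<ge> 1" "Lambda_k1 k A \<alpha> = robin_sum k A \<alpha> a"
      using Lambda_k1_attained[OF assms, of k] elim by auto
    then show ?case
      using Lambda_k1_minimizer_bounds[OF assms _ _ a] elim unfolding c_def c'_def U_def by blast
  qed
  obtain k where "k \<ge> 2" "?P k" using eventually_happens'[OF sequentially_bot ev] by blast
  then obtain a where "c * real k powr (2/3) \<le> a" "a \<le> c' * real k powr (2/3)" by blast
  then have "c * real k powr (2/3) \<le> c' * real k powr (2/3)" by linarith
  moreover have "real k powr (2/3) > 0" using \<open>k \<ge> 2\<close> by simp
  ultimately have "c \<le> c'" by (rule mult_right_le_imp_le)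
  have "\<forall>\<^sub>F k in sequentially. ?P k" using ev by (rule eventually_mono) (rule conjunct2)
  with \<open>c \<le> c'\<close> show ?thesis using \<open>c > 0\<close> by (intro exI[of _ c] exI[of _ c'] conjI)
qed

theorem lemma6p1:
  fixes A \<alpha> :: real
  assumes "A > 0" and "\<alpha> > 0"
  shows "(\<forall>k\<ge>2. 3 * pi\<^sup>2 * \<alpha> powr (2/3)
                  / ((pi\<^sup>2 + 2 * sqrt A * \<alpha>) powr (2/3) * A powr (2/3))
                  * (real k - 2) powr (2/3) \<le> Lambda_k1 k A \<alpha>) \<and>
        (\<forall>k\<ge>2. \<alpha> \<le> pi\<^sup>2 * A powr (-1/2) * (real k)\<^sup>2 \<longrightarrow>
                  Lambda_k1 k A \<alpha> \<le> 3 * (pi * \<alpha> / A) powr (2/3) * real k powr (2/3)) \<and>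
        (\<forall>k\<ge>2. \<exists>a\<ge>1. Lambda_k1 k A \<alpha> = robin_sum k A \<alpha> a) \<and>
        (\<exists>c c'. 0 < c \<and> c \<le> c' \<and>
           (\<forall>\<^sub>F k in sequentially. \<exists>a\<ge>1. Lambda_k1 k A \<alpha> = robin_sum k A \<alpha> a \<and>
               c * real k powr (2/3) \<le> a \<and> a \<le> c' * real k powr (2/3))) \<and>
        ((\<lambda>k. Lambda_k1 k A \<alpha> / real k powr (2/3)) \<longlonglongrightarrow> 3 * (pi * \<alpha> / A) powr (2/3))"
proof (intro conjI allI impI)
  fix k :: nat assume "k \<ge> 2"
  then show "3 * pi\<^sup>2 * \<alpha> powr (2/3) / ((pi\<^sup>2 + 2 * sqrt A * \<alpha>) powr (2/3) * A powr (2/3))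
               * (real k - 2) powr (2/3) \<le> Lambda_k1 k A \<alpha>"
    by (rule Lambda_k1_lower[OF assms])
  assume "\<alpha> \<le> pi\<^sup>2 * A powr (-1/2) * (real k)\<^sup>2"
  then have "\<alpha> * sqrt A \<le> pi\<^sup>2 * (real k)\<^sup>2"
    using assms by (simp add: powr_minus_divide powr_half_sqrt field_simps)
  then show "Lambda_k1 k A \<alpha> \<le> 3 * (pi * \<alpha> / A) powr (2/3) * real k powr (2/3)"
    using Lambda_k1_upper[OF assms] \<open>k \<ge> 2\<close> by simp
next
  fix k :: nat assume "k \<ge> 2"
  then show "\<exists>a\<ge>1. Lambda_k1 k A \<alpha> = robin_sum k A \<alpha> a"
    using Lambda_k1_attained[OF assms, of k] by auto
qed (use Lambda_k1_minimizer_growth[OF assms] Lambda_k1_asymptotics[OF assms] in auto)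

end
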